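(* Let $q\in(0,1)$ and let $\mathbf X_1,\mathbf X_2,\dots$ be i.i.d. random vectors in $\mathbb R^n$ with nonnegative components, distributed as $\mathbf X$, whose log moment generating function $\Lambda(\boldsymbol\lambda)=\log\mathbb E[e^{\langle\boldsymbol\lambda,\mathbf X\rangle}]$ is finite for all $\boldsymbol\lambda\in\mathbb R^n$. Then for every $\delta>0$, $$\lim_{t\to\infty}\frac1t\log\mathsf P\Big(\frac1t\sum_{i=1}^t q^i\mathbf X_i\ge\delta\mathbf 1\Big)=-\infty,$$ where $\mathbf 1$ is the all-ones vector and $\mathbf x\ge\mathbf y$ means $x_j\ge y_j$ for every component $j$. *)

theory Defs
  imports "HOL-Probability.Probability"
begin

text \<open>Extended-real natural logarithm: log 0 = -infinity (Isabelle's ln 0 = 0 would be wrong).\<close>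
definition eln :: "real \<Rightarrow> ereal" where
  "eln x = (if x > 0 then ereal (ln x) else -\<infinity>)"

end

theory Submission
  imports Defs "HOL-Real_Asymp.Real_Asymp"
begin

text \<open>
  A crude union bound suffices: if the geometrically weighted average of \<open>X\<^sub>1, \<dots>, X\<^sub>t\<close>
  exceeds \<open>\<delta>\<close> in some coordinate, then, since \<open>\<Sum>\<^sub>i q\<^sup>i < 1 / (1 - q)\<close>, one of the \<open>X\<^sub>i\<close>
  exceeds \<open>t \<delta> (1 - q)\<close> in that coordinate. As the \<open>X\<^sub>i\<close> are identically distributed, the
  probability is at most \<open>t\<close> times a tail probability of \<open>X\<^sub>1\<close>, and by the Chernoff bound with
  an arbitrarily large exponent \<open>\<lambda>\<close> this tail is \<open>O(e\<^sup>-\<^sup>K\<^sup>t)\<close> for every \<open>K\<close>.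
\<close>

lemma eln_div_less:
  fixes p t r :: real
  assumes "t > 0" "p < exp (r * t)"
  shows "eln p / ereal t < ereal r"
proof (cases "p > 0")
  case True
  have "ln p < r * t" using assms True by (metis exp_less_cancel_iff exp_ln)
  hence "ln p / t < r" using assms by (simp add: divide_less_eq)
  thus ?thesis using True assms by (simp add: eln_def ereal_divide)
next
  case False
  thus ?thesis using assms by (simp add: eln_def divide_ereal_def)
qed

lemma eventually_mult_exp_less:
  fixes C K r :: real
  assumes "0 < K + r"
  shows "eventually (\<lambda>t::nat. real t * C * exp (- K * real t) < exp (r * real t)) sequentially"
proof -
  have "((\<lambda>t::nat. real t * C * exp (- (K + r) * real t)) \<longlongrightarrow> 0) sequentially"
    using assms by real_asymp
  hence "eventually (\<lambda>t::nat. real t * C * exp (- (K + r) * real t) < 1) sequentially"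
    by (rule order_tendstoD) simp
  thus ?thesis
  proof eventually_elim
    case (elim t)
    have "real t * C * exp (- K * real t) = real t * C * exp (- (K + r) * real t) * exp (r * real t)"
      by (simp add: mult_exp_exp algebra_simps)
    also have "\<dots> < 1 * exp (r * real t)"
      using elim by (intro mult_strict_right_mono) auto
    finally show ?case by simp
  qed
qed

lemma eln_div_tendsto_MInfty:
  fixes p :: "nat \<Rightarrow> real"
  assumes "\<And>K. K > 0 \<Longrightarrow> \<exists>C. eventually (\<lambda>t. p t \<le> real t * C * exp (- K * real t)) sequentially"
  shows "((\<lambda>t. eln (p t) / ereal (real t)) \<longlongrightarrow> -\<infinity>) sequentially"
  unfolding tendsto_MInfty
proof
  fix r :: real
  have "\<exists>C. eventually (\<lambda>t. p t \<le> real t * C * exp (- (\<bar>r\<bar> + 1) * real t)) sequentially"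
    by (rule assms) linarith
  then obtain C where "eventually (\<lambda>t. p t \<le> real t * C * exp (- (\<bar>r\<bar> + 1) * real t)) sequentially"
    by blast
  moreover have "eventually (\<lambda>t::nat. real t * C * exp (- (\<bar>r\<bar> + 1) * real t) < exp (r * real t))
      sequentially"
    by (rule eventually_mult_exp_less) linarith
  moreover have "eventually (\<lambda>t::nat. t \<ge> 1) sequentially"
    by (rule eventually_ge_at_top)
  ultimately show "eventually (\<lambda>t. eln (p t) / ereal (real t) < ereal r) sequentially"
    by eventually_elim (auto intro: eln_div_less)
qed

lemma measure_ge_le_exp_moment:
  fixes Z :: "'a \<Rightarrow> real"
  assumes "integrable M (\<lambda>\<omega>. exp (l * Z \<omega>))" "l > 0"
  shows "measure M {\<omega> \<in> space M. c \<le> Z \<omega>} \<le> (\<integral>\<omega>. exp (l * Z \<omega>) \<partial>M) * exp (- l * c)"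
proof -
  have "{\<omega> \<in> space M. c \<le> Z \<omega>} = {\<omega> \<in> space M. exp (l * c) \<le> exp (l * Z \<omega>)}"
    using assms(2) by auto
  also have "measure M \<dots> \<le> (\<integral>\<omega>. exp (l * Z \<omega>) \<partial>M) / exp (l * c)"
    by (rule integral_Markov_inequality_measure[OF assms(1), of "space M"]) auto
  also have "\<dots> = (\<integral>\<omega>. exp (l * Z \<omega>) \<partial>M) * exp (- l * c)"
    by (simp add: exp_minus divide_inverse)
  finally show ?thesis .
qed

lemma exists_ge_of_geometric_sum_ge:
  fixes q s :: real and x :: "nat \<Rightarrow> real"
  assumes "0 \<le> q" "q < 1" "0 < s" "s \<le> (\<Sum>i=1..t. q ^ i * x i)"
  shows "\<exists>i\<in>{1..t}. s * (1 - q) \<le> x i"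
proof (rule ccontr)
  assume "\<not> ?thesis"
  hence "(\<Sum>i=1..t. q ^ i * x i) \<le> (\<Sum>i=1..t. q ^ i * (s * (1 - q)))"
    using assms(1) by (intro sum_mono mult_left_mono) (auto simp: not_le less_imp_le)
  also have "\<dots> = s * ((1 - q) * (\<Sum>i=1..t. q ^ i))"
    by (simp add: sum_distrib_left sum_distrib_right algebra_simps)
  also have "(1 - q) * (\<Sum>i=1..t. q ^ i) = q - q ^ Suc t"
    using assms(2) by (simp add: sum_gp)
  also have "s * (q - q ^ Suc t) \<le> s * q"
    using assms(1,3) by (intro mult_left_mono) auto
  also have "\<dots> < s"
    using assms(2,3) by simp
  finally show False using assms(4) by simp
qed

lemma measure_eq_of_distr_eq:
  assumes "X \<in> M \<rightarrow>\<^sub>M N" "Y \<in> M \<rightarrow>\<^sub>M N" "distr M N X = distr M N Y" "A \<in> sets N"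
  shows "measure M {\<omega> \<in> space M. X \<omega> \<in> A} = measure M {\<omega> \<in> space M. Y \<omega> \<in> A}"
proof -
  have "measure M {\<omega> \<in> space M. Z \<omega> \<in> A} = measure (distr M N Z) A" if "Z \<in> M \<rightarrow>\<^sub>M N" for Z
    using measure_distr[OF that assms(4)] by (simp add: vimage_def Int_def conj_commute)
  with assms show ?thesis by simp
qed

lemma distr_vec_nth_eq:
  fixes X Y :: "'a \<Rightarrow> real ^ 'n"
  assumes "X \<in> borel_measurable M" "Y \<in> borel_measurable M" "distr M borel X = distr M borel Y"
  shows "distr M borel (\<lambda>\<omega>. X \<omega> $ j) = distr M borel (\<lambda>\<omega>. Y \<omega> $ j)"
proof -
  have "distr M borel (\<lambda>\<omega>. Z \<omega> $ j) = distr (distr M borel Z) borel (\<lambda>x. x $ j)"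
    if "Z \<in> borel_measurable M" for Z :: "'a \<Rightarrow> real ^ 'n"
    using that by (subst distr_distr) (auto simp: comp_def)
  with assms show ?thesis by simp
qed

lemma (in prob_space) geometric_average_tail_le:
  fixes Z :: "nat \<Rightarrow> 'a \<Rightarrow> real"
  assumes "0 \<le> q" "q < 1" "\<delta> > 0" "t \<ge> 1"
    and meas: "\<And>i. i \<ge> 1 \<Longrightarrow> Z i \<in> borel_measurable M"
    and ident: "\<And>i. i \<ge> 1 \<Longrightarrow> distr M borel (Z i) = distr M borel (Z 1)"
  shows "measure M {\<omega> \<in> space M. \<delta> \<le> (1 / real t) * (\<Sum>i=1..t. q ^ i * Z i \<omega>)}
           \<le> real t * measure M {\<omega> \<in> space M. real t * \<delta> * (1 - q) \<le> Z 1 \<omega>}"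
proof -
  define B where "B i = {\<omega> \<in> space M. real t * \<delta> * (1 - q) \<le> Z i \<omega>}" for i
  have B_sets: "B i \<in> events" if "i \<ge> 1" for i
    unfolding B_def using meas[OF that] by measurable
  have "{\<omega> \<in> space M. \<delta> \<le> (1 / real t) * (\<Sum>i=1..t. q ^ i * Z i \<omega>)} \<subseteq> (\<Union>i\<in>{1..t}. B i)"
  proof safe
    fix \<omega> assume "\<omega> \<in> space M" "\<delta> \<le> (1 / real t) * (\<Sum>i=1..t. q ^ i * Z i \<omega>)"
    hence "real t * \<delta> \<le> (\<Sum>i=1..t. q ^ i * Z i \<omega>)"
      using assms(4) by (simp add: field_simps)
    with \<open>\<omega> \<in> space M\<close> show "\<omega> \<in> (\<Union>i\<in>{1..t}. B i)"
      using exists_ge_of_geometric_sum_ge[of q "real t * \<delta>"] assms(1-4) by (auto simp: B_def)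
  qed
  hence "measure M {\<omega> \<in> space M. \<delta> \<le> (1 / real t) * (\<Sum>i=1..t. q ^ i * Z i \<omega>)}
           \<le> measure M (\<Union>i\<in>{1..t}. B i)"
    by (rule finite_measure_mono) (use B_sets in auto)
  also have "\<dots> \<le> (\<Sum>i=1..t. measure M (B i))"
    by (rule finite_measure_subadditive_finite) (use B_sets in auto)
  also have "\<dots> = (\<Sum>i=1..t. measure M (B 1))"
  proof (intro sum.cong refl)
    fix i assume "i \<in> {1..t}"
    hence "i \<ge> 1" by simp
    thus "measure M (B i) = measure M (B 1)"
      using measure_eq_of_distr_eq[OF meas[OF \<open>i \<ge> 1\<close>] meas[OF order_refl] ident[OF \<open>i \<ge> 1\<close>],
          of "{x. real t * \<delta> * (1 - q) \<le> x}"]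
      by (simp add: B_def)
  qed
  finally show ?thesis by (simp add: B_def)
qed

lemma (in prob_space) geometric_average_tail_exp_decay:
  fixes Z :: "nat \<Rightarrow> 'a \<Rightarrow> real"
  assumes "0 \<le> q" "q < 1" "\<delta> > 0" "K > 0"
    and meas: "\<And>i. i \<ge> 1 \<Longrightarrow> Z i \<in> borel_measurable M"
    and ident: "\<And>i. i \<ge> 1 \<Longrightarrow> distr M borel (Z i) = distr M borel (Z 1)"
    and moment: "\<And>l. integrable M (\<lambda>\<omega>. exp (l * Z 1 \<omega>))"
  shows "\<exists>C. eventually (\<lambda>t. measure M {\<omega> \<in> space M. \<delta> \<le> (1 / real t) * (\<Sum>i=1..t. q ^ i * Z i \<omega>)}
           \<le> real t * C * exp (- K * real t)) sequentially"
proof -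
  define l where "l = K / (\<delta> * (1 - q))"
  have "l > 0" using assms(2-4) by (simp add: l_def)
  have "measure M {\<omega> \<in> space M. \<delta> \<le> (1 / real t) * (\<Sum>i=1..t. q ^ i * Z i \<omega>)}
      \<le> real t * (\<integral>\<omega>. exp (l * Z 1 \<omega>) \<partial>M) * exp (- K * real t)" if "t \<ge> 1" for t
  proof -
    have "measure M {\<omega> \<in> space M. \<delta> \<le> (1 / real t) * (\<Sum>i=1..t. q ^ i * Z i \<omega>)}
        \<le> real t * measure M {\<omega> \<in> space M. real t * \<delta> * (1 - q) \<le> Z 1 \<omega>}"
      using assms(1-3) that meas ident by (rule geometric_average_tail_le)
    also have "\<dots> \<le> real t * ((\<integral>\<omega>. exp (l * Z 1 \<omega>) \<partial>M) * exp (- l * (real t * \<delta> * (1 - q))))"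
      using measure_ge_le_exp_moment[OF moment \<open>l > 0\<close>] by (intro mult_left_mono) auto
    also have "\<dots> = real t * (\<integral>\<omega>. exp (l * Z 1 \<omega>) \<partial>M) * exp (- K * real t)"
      using assms(2,3) by (simp add: l_def field_simps)
    finally show ?thesis .
  qed
  thus ?thesis
    using eventually_ge_at_top[of 1] by (blast intro: eventually_mono)
qed

theorem lemma5:
  fixes M :: "'a measure" and X :: "nat \<Rightarrow> 'a \<Rightarrow> real ^ 'n" and q \<delta> :: real
  assumes "prob_space M"
    and "0 < q" "q < 1"
    and "prob_space.indep_vars M (\<lambda>_. borel) X {1..}"
    and "\<forall>i\<ge>1. distr M borel (X i) = distr M borel (X 1)"
    and "\<forall>i\<ge>1. AE \<omega> in M. \<forall>j. 0 \<le> X i \<omega> $ j"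
    and "\<forall>l :: real ^ 'n. integrable M (\<lambda>\<omega>. exp (l \<bullet> X 1 \<omega>))"
    and "\<delta> > 0"
  shows "((\<lambda>t::nat. eln (measure M {\<omega> \<in> space M.
            \<forall>j. (1 / real t) * (\<Sum>i=1..t. q ^ i * X i \<omega> $ j) \<ge> \<delta>}) / ereal (real t))
          \<longlongrightarrow> -\<infinity>) sequentially"
proof (rule eln_div_tendsto_MInfty)
  interpret prob_space M by fact
  fix K :: real assume "K > 0"
  fix j :: 'n
  have X_meas: "X i \<in> borel_measurable M" if "i \<ge> 1" for i
    using assms(4) that unfolding indep_vars_def by auto
  have coord_meas: "(\<lambda>\<omega>. X i \<omega> $ j) \<in> borel_measurable M" if "i \<ge> 1" for i
    using X_meas[OF that]
    by (rule measurable_compose) (intro borel_measurable_continuous_onI continuous_intros)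
  have all_le_coord: "measure M {\<omega> \<in> space M. \<forall>j. (1 / real t) * (\<Sum>i=1..t. q ^ i * X i \<omega> $ j) \<ge> \<delta>}
      \<le> measure M {\<omega> \<in> space M. \<delta> \<le> (1 / real t) * (\<Sum>i=1..t. q ^ i * X i \<omega> $ j)}" for t
  proof (rule finite_measure_mono)
    have "(\<lambda>\<omega>. \<Sum>i=1..t. q ^ i * X i \<omega> $ j) \<in> borel_measurable M"
      using coord_meas by (intro borel_measurable_sum borel_measurable_times) auto
    thus "{\<omega> \<in> space M. \<delta> \<le> (1 / real t) * (\<Sum>i=1..t. q ^ i * X i \<omega> $ j)} \<in> events"
      by measurable
  qed auto
  have "\<exists>C. eventually (\<lambda>t. measure M {\<omega> \<in> space M. \<delta> \<le> (1 / real t) * (\<Sum>i=1..t. q ^ i * X i \<omega> $ j)}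
      \<le> real t * C * exp (- K * real t)) sequentially"
  proof (rule geometric_average_tail_exp_decay[where Z = "\<lambda>i \<omega>. X i \<omega> $ j"])
    show "distr M borel (\<lambda>\<omega>. X i \<omega> $ j) = distr M borel (\<lambda>\<omega>. X 1 \<omega> $ j)" if "i \<ge> 1" for i
      using X_meas[OF that] X_meas[OF order_refl] assms(5)[rule_format, OF that] by (rule distr_vec_nth_eq)
    show "integrable M (\<lambda>\<omega>. exp (l * X 1 \<omega> $ j))" for l
      using assms(7)[rule_format, of "axis j l"] by (simp add: inner_axis' mult.commute)
  qed (use assms(2,3,8) \<open>K > 0\<close> coord_meas in auto)
  then obtain C where "eventually (\<lambda>t. measure M {\<omega> \<in> space M.
      \<delta> \<le> (1 / real t) * (\<Sum>i=1..t. q ^ i * X i \<omega> $ j)} \<le> real t * C * exp (- K * real t)) sequentially"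
    by blast
  hence "eventually (\<lambda>t. measure M {\<omega> \<in> space M.
      \<forall>j. (1 / real t) * (\<Sum>i=1..t. q ^ i * X i \<omega> $ j) \<ge> \<delta>} \<le> real t * C * exp (- K * real t)) sequentially"
    by eventually_elim (rule order_trans[OF all_le_coord])
  thus "\<exists>C. eventually (\<lambda>t. measure M {\<omega> \<in> space M.
      \<forall>j. (1 / real t) * (\<Sum>i=1..t. q ^ i * X i \<omega> $ j) \<ge> \<delta>} \<le> real t * C * exp (- K * real t)) sequentially"
    by blast
qed

end
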